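(* Let $a\in\mathbb C^*$ with $a\neq\pm1$. Then for every $L\ge1$ the map $s_{a,L}$ induces a Lie algebra isomorphism $\mathfrak{OA}_{a,L}\cong(\mathbb C[u]/u^L\mathbb C[u])\otimes\mathfrak{sl}_2$, and $s_a$ induces an isomorphism $\widehat{\mathfrak{OA}}_a\cong\mathfrak{sl}_2[[u]]$ which carries $\widehat{\mathfrak{OA}}_a^L$ onto $u^L\mathfrak{sl}_2[[u]]$ for every $L\ge0$.
   Context: Work over $\mathbb C$. $\mathfrak{sl}_2$ has basis $e,f,h$ with $[e,f]=h$, $[h,e]=2e$, $[h,f]=-2f$. $L(\mathfrak{sl}_2)=\mathbb C[t,t^{-1}]\otimes\mathfrak{sl}_2$ is the loop algebra with bracket $[p(t)x,q(t)y]=p(t)q(t)[x,y]$. The Onsager algebra is the Lie subalgebra $\mathfrak{OA}=\{p(t)e+p(t^{-1})f+q(t)h:\ p,q\in\mathbb C[t,t^{-1}],\ q(t^{-1})=-q(t)\}$ of $L(\mathfrak{sl}_2)$. For $a\in\mathbb C^*$, $U_a(t)=t^2-(a+a^{-1})t+1$ if $a^2\neq1$ and $U_a(t)=t-a$ if $a=\pm1$. For a reciprocal polynomial $P$ (nonconstant monic with $P(t)=\pm t^{\deg P}P(t^{-1})$), $\mathfrak I_{P(t)}=\{p(t)e+p(t^{-1})f+q(t)h\in\mathfrak{OA}:\ p(t),q(t)\in P(t)\mathbb C[t,t^{-1}]\}$. For $a\in\mathbb C^*$ and $L\ge1$ let $\mathfrak{OA}_{a,L}=\mathfrak{OA}/\mathfrak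 I_{U_a(t)^L}$, and $\mathfrak{OA}_{a,0}=0$; for $L\ge K$ there are canonical surjections $\mathfrak{OA}_{a,L}\to\mathfrak{OA}_{a,K}$. $\widehat{\mathfrak{OA}}_a=\varprojlim_L\mathfrak{OA}_{a,L}$ is the inverse limit Lie algebra, $\psi_{a,L}:\widehat{\mathfrak{OA}}_a\to\mathfrak{OA}_{a,L}$ the canonical map, and $\widehat{\mathfrak{OA}}_a^L=\ker\psi_{a,L}$. For $a\in\mathbb C^*$, $s_a:\mathfrak{OA}\to\mathfrak{sl}_2[[u]]=\mathbb C[[u]]\otimes\mathfrak{sl}_2$ is the Lie homomorphism given by Taylor expansion at $t=a$ in $u=t-a$: $p(t)x\mapsto\sum_{j\ge0}\frac{p^{(j)}(a)}{j!}u^jx$; $s_{a,L}$ is its composition with the projection to $\mathfrak{sl}_2[[u]]/u^L\mathfrak{sl}_2[[u]]\cong(\mathbb C[u]/u^L\mathbb C[u])\otimes\mathfrak{sl}_2$. *)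

theory Defs
  imports "HOL-Analysis.Analysis" "HOL-Computational_Algebra.Computational_Algebra"
begin

section \<open>Laurent polynomials C[t,t^-1] as finitely supported coefficient functions\<close>

type_synonym lpoly = "int \<Rightarrow> complex"

definition is_lpoly :: "lpoly \<Rightarrow> bool" where
  "is_lpoly c \<longleftrightarrow> finite {k. c k \<noteq> 0}"

definition lp_add :: "lpoly \<Rightarrow> lpoly \<Rightarrow> lpoly" where
  "lp_add c d = (\<lambda>k. c k + d k)"

definition lp_neg :: "lpoly \<Rightarrow> lpoly" where
  "lp_neg c = (\<lambda>k. - c k)"

definition lp_smult :: "complex \<Rightarrow> lpoly \<Rightarrow> lpoly" where
  "lp_smult z c = (\<lambda>k. z * c k)"

definition lp_mult :: "lpoly \<Rightarrow> lpoly \<Rightarrow> lpoly" where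
  "lp_mult c d = (\<lambda>n. \<Sum>k\<in>{k. c k \<noteq> 0}. c k * d (n - k))"

definition lp_refl :: "lpoly \<Rightarrow> lpoly" where
  "lp_refl c = (\<lambda>k. c (- k))"

definition lp_of_poly :: "complex poly \<Rightarrow> lpoly" where
  "lp_of_poly P = (\<lambda>k. if 0 \<le> k then coeff P (nat k) else 0)"

text \<open>evaluation of a Laurent polynomial at t (meaningful for t \<noteq> 0)\<close>
definition lp_eval :: "lpoly \<Rightarrow> complex \<Rightarrow> complex" where
  "lp_eval c t = (\<Sum>k\<in>{k. c k \<noteq> 0}. c k * t powi k)"

definition lp_in_ideal :: "complex poly \<Rightarrow> lpoly \<Rightarrow> bool" where
  "lp_in_ideal P c \<longleftrightarrow> (\<exists>r. is_lpoly r \<and> c = lp_mult (lp_of_poly P) r)"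

section \<open>Loop algebra L(sl2): triples (A,B,C) meaning A e + B f + C h\<close>

type_synonym loop = "lpoly \<times> lpoly \<times> lpoly"

definition loop_carrier :: "loop set" where
  "loop_carrier = {(A, B, C). is_lpoly A \<and> is_lpoly B \<and> is_lpoly C}"

definition loop_add :: "loop \<Rightarrow> loop \<Rightarrow> loop" where
  "loop_add x y = (case x of (a, b, c) \<Rightarrow> case y of (a', b', c') \<Rightarrow>
     (lp_add a a', lp_add b b', lp_add c c'))"

definition loop_smult :: "complex \<Rightarrow> loop \<Rightarrow> loop" where
  "loop_smult z x = (case x of (a, b, c) \<Rightarrow> (lp_smult z a, lp_smult z b, lp_smult z c))"

text \<open>[e,f]=h, [h,e]=2e, [h,f]=-2f, extended C[t,t^-1]-bilinearly\<close>
definition loop_br :: "loop \<Rightarrow> loop \<Rightarrow> loop" where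
  "loop_br x y = (case x of (a, b, c) \<Rightarrow> case y of (a', b', c') \<Rightarrow>
     (lp_smult 2 (lp_add (lp_mult c a') (lp_neg (lp_mult a c'))),
      lp_smult 2 (lp_add (lp_mult b c') (lp_neg (lp_mult c b'))),
      lp_add (lp_mult a b') (lp_neg (lp_mult b a'))))"

definition loop_zero :: loop where
  "loop_zero = ((\<lambda>_. 0), (\<lambda>_. 0), (\<lambda>_. 0))"

definition OA :: "loop set" where
  "OA = {(p, lp_refl p, q) | p q. is_lpoly p \<and> is_lpoly q \<and> lp_refl q = lp_neg q}"

definition OA_ideal :: "complex poly \<Rightarrow> loop set" where
  "OA_ideal P = {x \<in> OA. lp_in_ideal P (fst x) \<and> lp_in_ideal P (snd (snd x))}"

definition U :: "complex \<Rightarrow> complex poly" where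
  "U a = (if a\<^sup>2 \<noteq> 1 then [:1, - (a + inverse a), 1:] else [:- a, 1:])"

text \<open>kernel of OA \<rightarrow> OA_{a,L}; for L = 0, OA_{a,0} = 0 so the kernel is all of OA\<close>
definition OA_ker :: "complex \<Rightarrow> nat \<Rightarrow> loop set" where
  "OA_ker a L = (if L = 0 then OA else OA_ideal (U a ^ L))"

definition OA_coset :: "complex \<Rightarrow> nat \<Rightarrow> loop \<Rightarrow> loop set" where
  "OA_coset a L x = {loop_add x y | y. y \<in> OA_ker a L}"

definition OA_quot :: "complex \<Rightarrow> nat \<Rightarrow> loop set set" where
  "OA_quot a L = OA_coset a L ` OA"

section \<open>Inverse limit: compatible families of cosets\<close>

definition OA_hat :: "complex \<Rightarrow> (nat \<Rightarrow> loop set) set" where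
  "OA_hat a = {X. \<forall>L. X L \<in> OA_quot a L \<and> (\<forall>K\<le>L. \<forall>x\<in>X L. X K = OA_coset a K x)}"

definition hat_add :: "complex \<Rightarrow> (nat \<Rightarrow> loop set) \<Rightarrow> (nat \<Rightarrow> loop set) \<Rightarrow> nat \<Rightarrow> loop set" where
  "hat_add a X Y = (\<lambda>L. \<Union>{OA_coset a L (loop_add x y) | x y. x \<in> X L \<and> y \<in> Y L})"

definition hat_smult :: "complex \<Rightarrow> complex \<Rightarrow> (nat \<Rightarrow> loop set) \<Rightarrow> nat \<Rightarrow> loop set" where
  "hat_smult a z X = (\<lambda>L. \<Union>{OA_coset a L (loop_smult z x) | x. x \<in> X L})"

definition hat_br :: "complex \<Rightarrow> (nat \<Rightarrow> loop set) \<Rightarrow> (nat \<Rightarrow> loop set) \<Rightarrow> nat \<Rightarrow> loop set" where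
  "hat_br a X Y = (\<lambda>L. \<Union>{OA_coset a L (loop_br x y) | x y. x \<in> X L \<and> y \<in> Y L})"

text \<open>kernel of psi_{a,L}: X L is the zero coset, i.e. the ideal itself\<close>
definition hat_ker :: "complex \<Rightarrow> nat \<Rightarrow> (nat \<Rightarrow> loop set) set" where
  "hat_ker a L = {X \<in> OA_hat a. X L = OA_ker a L}"

section \<open>sl2[[u]]: triples of power series (coefficients of e, f, h)\<close>

type_synonym sl2ps = "complex fps \<times> complex fps \<times> complex fps"

definition ps_add :: "sl2ps \<Rightarrow> sl2ps \<Rightarrow> sl2ps" where
  "ps_add x y = (case x of (a, b, c) \<Rightarrow> case y of (a', b', c') \<Rightarrow> (a + a', b + b', c + c'))"

definition ps_smult :: "complex \<Rightarrow> sl2ps \<Rightarrow> sl2ps" where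
  "ps_smult z x = (case x of (a, b, c) \<Rightarrow> (fps_const z * a, fps_const z * b, fps_const z * c))"

definition ps_br :: "sl2ps \<Rightarrow> sl2ps \<Rightarrow> sl2ps" where
  "ps_br x y = (case x of (a, b, c) \<Rightarrow> case y of (a', b', c') \<Rightarrow>
     (2 * (c * a' - a * c'), 2 * (b * c' - c * b'), a * b' - b * a'))"

definition ps_uL :: "nat \<Rightarrow> sl2ps set" where
  "ps_uL L = {(fps_X ^ L * A, fps_X ^ L * B, fps_X ^ L * C) | A B C. True}"

text \<open>projection sl2[[u]] \<rightarrow> sl2[[u]]/u^L sl2[[u]] = (C[u]/u^L) \<otimes> sl2, canonical representatives\<close>
definition ps_trunc :: "nat \<Rightarrow> sl2ps \<Rightarrow> sl2ps" where
  "ps_trunc L x = (case x of (a, b, c) \<Rightarrow> (fps_cutoff L a, fps_cutoff L b, fps_cutoff L c))"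

definition taylor :: "complex \<Rightarrow> lpoly \<Rightarrow> complex fps" where
  "taylor a p = Abs_fps (\<lambda>j. (deriv ^^ j) (lp_eval p) a / fact j)"

definition s_map :: "complex \<Rightarrow> loop \<Rightarrow> sl2ps" where
  "s_map a x = (case x of (A, B, C) \<Rightarrow> (taylor a A, taylor a B, taylor a C))"

definition s_mapL :: "complex \<Rightarrow> nat \<Rightarrow> loop \<Rightarrow> sl2ps" where
  "s_mapL a L x = ps_trunc L (s_map a x)"

end

theory Submission
  imports Defs "HOL-Complex_Analysis.Complex_Analysis" "HOL-Computational_Algebra.Field_as_Ring"
begin

text \<open>
  Taylor expansion at \<open>a \<noteq> 0\<close> is a ring homomorphism from Laurent polynomials to power series,
  so \<open>s\<^sub>a\<close> is a Lie homomorphism. Since \<open>p(t\<^sup>-\<^sup>1)\<close> vanishes to order \<open>n\<close> at \<open>a\<close> iff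
  \<open>p\<close> vanishes to order \<open>n\<close> at \<open>a\<^sup>-\<^sup>1\<close>, an element \<open>(p, p(t\<^sup>-\<^sup>1), q)\<close> of the Onsager
  algebra lies in the kernel of \<open>s\<^sub>a\<^sub>,\<^sub>n\<close> iff \<open>p\<close> and \<open>q\<close> vanish to order \<open>n\<close> at both
  \<open>a\<close> and \<open>a\<^sup>-\<^sup>1\<close>, which for \<open>a \<noteq> a\<^sup>-\<^sup>1\<close> means \<open>p, q \<in> U\<^sub>a\<^sup>n \<complex>[t,t\<^sup>-\<^sup>1]\<close>.
  Any jet at \<open>a\<close> is the Taylor jet of some \<open>(t - a\<^sup>-\<^sup>1)\<^sup>n R(t)\<close>, which vanishes to order
  \<open>n\<close> at \<open>a\<^sup>-\<^sup>1\<close>; this gives surjectivity of \<open>s\<^sub>a\<^sub>,\<^sub>n\<close>. Hence the cosets of \<open>OA_ker a n\<close>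
  are the fibres of \<open>s_mapL a n\<close> over truncations of power series, and a compatible family of
  such cosets is the family of fibres over the truncations of a unique \<open>S \<in> sl\<^sub>2[[u]]\<close>.
\<close>

section \<open>Laurent polynomials\<close>

abbreviation lp_support :: "lpoly \<Rightarrow> int set" where
  "lp_support c \<equiv> {k. c k \<noteq> 0}"

lemma lp_eval_eq_sum_superset:
  assumes "finite S" "lp_support c \<subseteq> S"
  shows "lp_eval c t = (\<Sum>k\<in>S. c k * t powi k)"
  unfolding lp_eval_def by (rule sum.mono_neutral_left) (use assms in auto)

lemma is_lpoly_add [simp]: "is_lpoly c \<Longrightarrow> is_lpoly d \<Longrightarrow> is_lpoly (lp_add c d)"
  unfolding is_lpoly_def lp_add_def
  by (rule finite_subset[of _ "lp_support c \<union> lp_support d"]) auto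

lemma is_lpoly_neg [simp]: "is_lpoly c \<Longrightarrow> is_lpoly (lp_neg c)"
  unfolding is_lpoly_def lp_neg_def by simp

lemma is_lpoly_smult [simp]: "is_lpoly c \<Longrightarrow> is_lpoly (lp_smult z c)"
  unfolding is_lpoly_def lp_smult_def
  by (rule finite_subset[of _ "lp_support c"]) auto

lemma lp_support_refl: "lp_support (lp_refl c) = uminus ` lp_support c"
  by (force simp: lp_refl_def)

lemma is_lpoly_refl [simp]: "is_lpoly c \<Longrightarrow> is_lpoly (lp_refl c)"
  unfolding is_lpoly_def lp_support_refl by simp

lemma lp_refl_refl [simp]: "lp_refl (lp_refl c) = c"
  unfolding lp_refl_def by simp

lemma lp_support_mult:
  "lp_support (lp_mult c d) \<subseteq> (\<lambda>(i, j). i + j) ` (lp_support c \<times> lp_support d)"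
proof
  fix n assume "n \<in> lp_support (lp_mult c d)"
  then obtain k where "k \<in> lp_support c" "d (n - k) \<noteq> 0"
    unfolding lp_mult_def by (metis (mono_tags, lifting) mem_Collect_eq mult_zero_right sum.neutral)
  then show "n \<in> (\<lambda>(i, j). i + j) ` (lp_support c \<times> lp_support d)"
    by (intro image_eqI[of _ _ "(k, n - k)"]) auto
qed

lemma is_lpoly_mult [simp]: "is_lpoly c \<Longrightarrow> is_lpoly d \<Longrightarrow> is_lpoly (lp_mult c d)"
  unfolding is_lpoly_def by (rule finite_subset[OF lp_support_mult]) auto

lemma lp_support_of_poly: "lp_support (lp_of_poly P) \<subseteq> int ` {..degree P}"
proof
  fix k assume "k \<in> lp_support (lp_of_poly P)"
  then have "0 \<le> k" "coeff P (nat k) \<noteq> 0" by (auto simp: lp_of_poly_def split: if_splits)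
  then show "k \<in> int ` {..degree P}"
    by (intro image_eqI[of _ _ "nat k"]) (auto intro: le_degree)
qed

lemma is_lpoly_of_poly [simp]: "is_lpoly (lp_of_poly P)"
  unfolding is_lpoly_def by (rule finite_subset[OF lp_support_of_poly]) auto

definition lp_monom :: "int \<Rightarrow> lpoly" where
  "lp_monom n = (\<lambda>k. if k = n then 1 else 0)"

lemma is_lpoly_monom [simp]: "is_lpoly (lp_monom n)"
  unfolding is_lpoly_def lp_monom_def by (rule finite_subset[of _ "{n}"]) auto

lemma lp_eval_add:
  "is_lpoly c \<Longrightarrow> is_lpoly d \<Longrightarrow> lp_eval (lp_add c d) t = lp_eval c t + lp_eval d t"
  unfolding is_lpoly_def
  by (subst (1 2 3) lp_eval_eq_sum_superset[of "lp_support c \<union> lp_support d"])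
     (auto simp: lp_add_def sum.distrib algebra_simps)

lemma lp_eval_neg: "lp_eval (lp_neg c) t = - lp_eval c t"
  unfolding lp_eval_def lp_neg_def by (simp add: sum_negf)

lemma lp_eval_smult: "is_lpoly c \<Longrightarrow> lp_eval (lp_smult z c) t = z * lp_eval c t"
  unfolding is_lpoly_def
  by (subst (1 2) lp_eval_eq_sum_superset[of "lp_support c"])
     (auto simp: lp_smult_def sum_distrib_left algebra_simps)

lemma lp_eval_refl: "lp_eval (lp_refl c) t = lp_eval c (inverse t)"
proof -
  have "lp_eval (lp_refl c) t = (\<Sum>k\<in>uminus ` lp_support c. c (- k) * t powi k)"
    unfolding lp_eval_def lp_support_refl by (simp add: lp_refl_def)
  also have "\<dots> = lp_eval c (inverse t)"
    by (subst sum.reindex) (auto simp: inj_on_def lp_eval_def power_int_minus power_int_inverse)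
  finally show ?thesis .
qed

lemma lp_eval_of_poly: "lp_eval (lp_of_poly P) t = poly P t"
proof -
  have "lp_eval (lp_of_poly P) t = (\<Sum>k\<in>int ` {..degree P}. lp_of_poly P k * t powi k)"
    by (rule lp_eval_eq_sum_superset) (use lp_support_of_poly in auto)
  also have "\<dots> = poly P t"
    by (subst sum.reindex) (auto simp: lp_of_poly_def poly_altdef)
  finally show ?thesis .
qed

lemma lp_eval_monom: "lp_eval (lp_monom n) t = t powi n"
  by (subst lp_eval_eq_sum_superset[of "{n}"]) (auto simp: lp_monom_def)

lemma lp_eval_mult:
  assumes c: "is_lpoly c" and d: "is_lpoly d" and t: "t \<noteq> 0"
  shows "lp_eval (lp_mult c d) t = lp_eval c t * lp_eval d t"
proof -
  define S where "S = (\<lambda>(i, j). i + j) ` (lp_support c \<times> lp_support d)"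
  have S: "finite S" using c d by (auto simp: S_def is_lpoly_def)
  have "lp_eval (lp_mult c d) t = (\<Sum>n\<in>S. \<Sum>k\<in>lp_support c. c k * d (n - k) * t powi n)"
    by (subst lp_eval_eq_sum_superset[OF S])
       (use lp_support_mult S_def in \<open>auto simp: lp_mult_def sum_distrib_right\<close>)
  also have "\<dots> = (\<Sum>k\<in>lp_support c. c k * (\<Sum>n\<in>S. d (n - k) * t powi n))"
    by (subst sum.swap) (simp add: sum_distrib_left mult.assoc)
  also have "\<dots> = (\<Sum>k\<in>lp_support c. c k * (t powi k * lp_eval d t))"
  proof (rule sum.cong[OF refl])
    fix k assume k: "k \<in> lp_support c"
    have sub: "lp_support d \<subseteq> (\<lambda>n. n - k) ` S"
      using k by (force simp: S_def image_iff)
    have "(\<Sum>n\<in>S. d (n - k) * t powi n) = (\<Sum>m\<in>(\<lambda>n. n - k) ` S. t powi k * (d m * t powi m))"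
      using t by (subst sum.reindex) (auto simp: inj_on_def power_int_diff intro!: sum.cong)
    also have "\<dots> = t powi k * lp_eval d t"
      using S sub by (subst lp_eval_eq_sum_superset[of "(\<lambda>n. n - k) ` S" d]) (auto simp: sum_distrib_left)
    finally show "c k * (\<Sum>n\<in>S. d (n - k) * t powi n) = c k * (t powi k * lp_eval d t)" by simp
  qed
  also have "\<dots> = lp_eval c t * lp_eval d t"
    by (simp add: lp_eval_def sum_distrib_right algebra_simps)
  finally show ?thesis .
qed

lemma lp_eval_analytic: "0 \<notin> A \<Longrightarrow> lp_eval c analytic_on A"
  unfolding lp_eval_def by (intro analytic_intros) auto

lemma lpoly_times_power_is_poly:
  assumes "is_lpoly p"
  shows "\<exists>P N. (\<forall>t. t \<noteq> 0 \<longrightarrow> poly P t = t ^ N * lp_eval p t) \<and>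
    (\<forall>k\<in>lp_support p. coeff P (nat (k + int N)) = p k)"
proof -
  define S where "S = lp_support p"
  have S: "finite S" using assms by (simp add: S_def is_lpoly_def)
  define N where "N = (\<Sum>k\<in>S. nat (- k))"
  have N: "0 \<le> k + int N" if "k \<in> S" for k
  proof -
    have "nat (- k) \<le> N" unfolding N_def using S that by (intro member_le_sum) auto
    then show ?thesis by linarith
  qed
  define P where "P = (\<Sum>k\<in>S. monom (p k) (nat (k + int N)))"
  have "coeff P (nat (k + int N)) = p k" if k: "k \<in> S" for k
  proof -
    have "coeff P (nat (k + int N)) = (\<Sum>j\<in>S. if j = k then p j else 0)"
      unfolding P_def coeff_sum coeff_monom
      by (intro sum.cong refl) (use N k in \<open>auto simp: eq_nat_nat_iff\<close>)
    then show ?thesis using S k by simp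
  qed
  moreover have "poly P t = t ^ N * lp_eval p t" if t: "t \<noteq> 0" for t
  proof -
    have "t ^ nat (k + int N) = t ^ N * t powi k" if "k \<in> S" for k
    proof -
      have "t ^ nat (k + int N) = t powi (k + int N)"
        using N[OF that] by (simp flip: power_int_of_nat)
      also have "\<dots> = t ^ N * t powi k"
        using t by (simp add: power_int_add mult.commute)
      finally show ?thesis .
    qed
    then show ?thesis
      by (simp add: P_def poly_sum poly_monom lp_eval_def S_def sum_distrib_left mult.left_commute)
  qed
  ultimately show ?thesis unfolding S_def by blast
qed

lemma lpoly_eqI:
  assumes c: "is_lpoly c" and d: "is_lpoly d" and eval: "\<And>t. t \<noteq> 0 \<Longrightarrow> lp_eval c t = lp_eval d t"
  shows "c = d"
proof -
  define p where "p = lp_add c (lp_neg d)"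
  have "is_lpoly p" using c d by (simp add: p_def)
  then obtain P N where P: "\<And>t. t \<noteq> 0 \<Longrightarrow> poly P t = t ^ N * lp_eval p t"
    and coeff: "\<And>k. k \<in> lp_support p \<Longrightarrow> coeff P (nat (k + int N)) = p k"
    using lpoly_times_power_is_poly by blast
  have "poly (pCons 0 P) t = 0" for t
    using P[of t] eval[of t] c d by (cases "t = 0") (auto simp: p_def lp_eval_add lp_eval_neg)
  then have "pCons 0 P = 0" using poly_all_0_iff_0 by blast
  then have "P = 0" by simp
  then have "p k = 0" for k using coeff[of k] by auto
  then show ?thesis by (auto simp: p_def lp_add_def lp_neg_def fun_eq_iff)
qed

lemma lp_refl_add: "lp_refl (lp_add c d) = lp_add (lp_refl c) (lp_refl d)"
  by (simp add: lp_refl_def lp_add_def)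

lemma lp_refl_smult: "lp_refl (lp_smult z c) = lp_smult z (lp_refl c)"
  by (simp add: lp_refl_def lp_smult_def)

section \<open>Power series expansions\<close>

lemma analytic_on_poly [analytic_intros]: "poly P analytic_on A"
proof -
  have "poly P analytic_on UNIV"
    by (subst analytic_on_open) (auto intro: holomorphic_intros)
  then show ?thesis using analytic_on_subset by blast
qed

lemma fps_expansion_eqI':
  assumes "(\<lambda>u. f (c + u)) has_fps_expansion F"
  shows "fps_expansion f c = F"
proof -
  have "fps_expansion f c = fps_expansion (\<lambda>u. f (c + u)) 0"
    unfolding fps_expansion_def by (subst higher_deriv_shift_0) (simp add: o_def)
  then show ?thesis using fps_expansion_eqI[OF assms] by simp
qed

lemma fps_expansion_cong_nonzero:
  assumes "c \<noteq> 0" "\<And>t. t \<noteq> 0 \<Longrightarrow> f t = g t"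
  shows "fps_expansion f c = fps_expansion g c"
proof (rule fps_expansion_cong)
  have "eventually (\<lambda>t. t \<in> - {0}) (nhds c)"
    using assms(1) by (intro eventually_nhds_in_open) auto
  then show "\<forall>\<^sub>F t in nhds c. f t = g t" by eventually_elim (use assms(2) in auto)
qed

lemma fps_expansion_add:
  "f analytic_on {c} \<Longrightarrow> g analytic_on {c} \<Longrightarrow>
    fps_expansion (\<lambda>t. f t + g t) c = fps_expansion f c + fps_expansion g c"
  by (intro fps_expansion_eqI' has_fps_expansion_add analytic_at_imp_has_fps_expansion)

lemma fps_expansion_minus:
  "f analytic_on {c} \<Longrightarrow> fps_expansion (\<lambda>t. - f t) c = - fps_expansion f c"
  by (intro fps_expansion_eqI' has_fps_expansion_minus analytic_at_imp_has_fps_expansion)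

lemma fps_expansion_cmult_left:
  "f analytic_on {c} \<Longrightarrow> fps_expansion (\<lambda>t. z * f t) c = fps_const z * fps_expansion f c"
  by (intro fps_expansion_eqI' has_fps_expansion_cmult_left analytic_at_imp_has_fps_expansion)

lemma fps_expansion_mult:
  "f analytic_on {c} \<Longrightarrow> g analytic_on {c} \<Longrightarrow>
    fps_expansion (\<lambda>t. f t * g t) c = fps_expansion f c * fps_expansion g c"
  by (intro fps_expansion_eqI' has_fps_expansion_mult analytic_at_imp_has_fps_expansion)

lemma fps_expansion_linear_power: "fps_expansion (\<lambda>t. (t - c) ^ n) c = fps_X ^ n"
  by (intro fps_expansion_eqI') (simp add: has_fps_expansion_fps_X_power)

lemma fps_expansion_linear_power_mult:
  "g analytic_on {c} \<Longrightarrow> fps_expansion (\<lambda>t. (t - c) ^ n * g t) c = fps_X ^ n * fps_expansion g c"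
  by (simp add: fps_expansion_mult fps_expansion_linear_power analytic_intros)

lemma fps_X_power_dvd_iff_fps_cutoff_eq_0:
  "fps_X ^ n dvd (F :: 'a :: field fps) \<longleftrightarrow> fps_cutoff n F = 0"
  by (cases "F = 0") (simp_all add: fps_cutoff_zero_iff fps_dvd_iff fps_X_power_subdegree)

lemma fps_cutoff_mult_cong:
  assumes "fps_cutoff n f = fps_cutoff n f'" "fps_cutoff n g = fps_cutoff n g'"
  shows "fps_cutoff n (f * g) = fps_cutoff n (f' * g')"
proof -
  have cutoff: "fps_cutoff n (f * g) = fps_cutoff n (fps_cutoff n f * fps_cutoff n g)" for f g :: "'a fps"
    by (simp add: fps_cutoff_eq_fps_cutoff_iff fps_cutoff_left_mult_nth fps_cutoff_right_mult_nth)
  have "fps_cutoff n (f * g) = fps_cutoff n (fps_cutoff n f' * fps_cutoff n g')"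
    by (simp only: cutoff[of f] assms)
  also have "\<dots> = fps_cutoff n (f' * g')" by (rule cutoff[symmetric])
  finally show ?thesis .
qed

lemma fps_cutoff_diff_cong:
  "fps_cutoff n f = fps_cutoff n f' \<Longrightarrow> fps_cutoff n g = fps_cutoff n g' \<Longrightarrow>
    fps_cutoff n (f - g) = fps_cutoff n (f' - (g' :: 'a :: group_add fps))"
  by (simp add: fps_cutoff_diff)

lemma fps_cutoff_coherent_limit:
  assumes "\<And>m n. m \<le> n \<Longrightarrow> fps_cutoff m (F n) = fps_cutoff m (F m)"
  shows "fps_cutoff n (Abs_fps (\<lambda>j. F (Suc j) $ j)) = fps_cutoff n (F n)"
proof -
  have "F (Suc j) $ j = F n $ j" if "j < n" for j
    using assms[of "Suc j" n] that by (simp add: fps_cutoff_eq_fps_cutoff_iff)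
  then show ?thesis by (simp add: fps_cutoff_eq_fps_cutoff_iff)
qed

lemma poly_linear_power_dvd_if_fps_expansion_dvd:
  "fps_X ^ n dvd fps_expansion (poly P) c \<Longrightarrow> [:- c, 1:] ^ n dvd P"
proof (induction n arbitrary: P)
  case (Suc n)
  from Suc.prems obtain G where "fps_expansion (poly P) c = fps_X * (fps_X ^ n * G)"
    by (auto simp: mult.assoc elim!: dvdE)
  then have "fps_expansion (poly P) c $ 0 = 0" by (simp add: fps_X_mult_nth)
  then have "poly P c = 0" by (simp add: fps_expansion_def)
  then obtain Q where Q: "P = [:- c, 1:] * Q" using poly_eq_0_iff_dvd by blast
  have "poly P = (\<lambda>t. (t - c) * poly Q t)" by (simp add: Q fun_eq_iff algebra_simps)
  then have "fps_expansion (poly P) c = fps_X * fps_expansion (poly Q) c"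
    using fps_expansion_linear_power_mult[of "poly Q" c 1] by (simp add: analytic_intros)
  then have "[:- c, 1:] ^ n dvd Q" using Suc by simp
  then show ?case unfolding Q power_Suc by (rule mult_dvd_mono[OF dvd_refl])
qed simp

lemma fps_expansion_sum_linear_powers:
  "fps_expansion (\<lambda>t. \<Sum>j<n. F $ j * (t - c) ^ j) c = fps_cutoff n F"
proof (rule fps_expansion_eqI')
  have "(\<lambda>u. \<Sum>j<n. F $ j * u ^ j) has_fps_expansion (\<Sum>j<n. fps_const (F $ j) * fps_X ^ j)"
    by (intro has_fps_expansion_sum has_fps_expansion_cmult_left has_fps_expansion_fps_X_power)
  also have "(\<Sum>j<n. fps_const (F $ j) * fps_X ^ j) = fps_cutoff n F"
    by (auto simp: fps_eq_iff fps_sum_nth fps_X_power_nth if_distrib cong: if_cong)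
  finally show "(\<lambda>u. \<Sum>j<n. F $ j * (c + u - c) ^ j) has_fps_expansion fps_cutoff n F"
    by simp
qed

lemma taylor_eq_fps_expansion: "taylor a p = fps_expansion (lp_eval p) a"
  by (simp add: taylor_def fps_expansion_def)

lemma taylor_add:
  "a \<noteq> 0 \<Longrightarrow> is_lpoly p \<Longrightarrow> is_lpoly q \<Longrightarrow> taylor a (lp_add p q) = taylor a p + taylor a q"
  unfolding taylor_eq_fps_expansion
  by (subst fps_expansion_cong_nonzero[where g = "\<lambda>t. lp_eval p t + lp_eval q t"])
     (auto simp: lp_eval_add fps_expansion_add lp_eval_analytic)

lemma taylor_neg: "a \<noteq> 0 \<Longrightarrow> taylor a (lp_neg p) = - taylor a p"
  unfolding taylor_eq_fps_expansion
  by (subst fps_expansion_cong_nonzero[where g = "\<lambda>t. - lp_eval p t"])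
     (auto simp: lp_eval_neg fps_expansion_minus lp_eval_analytic)

lemma taylor_smult:
  "a \<noteq> 0 \<Longrightarrow> is_lpoly p \<Longrightarrow> taylor a (lp_smult z p) = fps_const z * taylor a p"
  unfolding taylor_eq_fps_expansion
  by (subst fps_expansion_cong_nonzero[where g = "\<lambda>t. z * lp_eval p t"])
     (auto simp: lp_eval_smult fps_expansion_cmult_left lp_eval_analytic)

lemma taylor_mult:
  "a \<noteq> 0 \<Longrightarrow> is_lpoly p \<Longrightarrow> is_lpoly q \<Longrightarrow> taylor a (lp_mult p q) = taylor a p * taylor a q"
  unfolding taylor_eq_fps_expansion
  by (subst fps_expansion_cong_nonzero[where g = "\<lambda>t. lp_eval p t * lp_eval q t"])
     (auto simp: lp_eval_mult fps_expansion_mult lp_eval_analytic)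

text \<open>\<open>fps_X ^ n dvd taylor c p\<close> expresses that \<open>p\<close> vanishes to order \<open>n\<close> at \<open>c\<close>.\<close>

lemma taylor_dvd_if_factor:
  assumes "c \<noteq> 0" "g analytic_on {c}" "\<And>t. t \<noteq> 0 \<Longrightarrow> lp_eval p t = (t - c) ^ n * g t"
  shows "fps_X ^ n dvd taylor c p"
proof -
  have "taylor c p = fps_X ^ n * fps_expansion g c"
    unfolding taylor_eq_fps_expansion using assms
    by (subst fps_expansion_cong_nonzero[where g = "\<lambda>t. (t - c) ^ n * g t"])
       (auto simp: fps_expansion_linear_power_mult)
  then show ?thesis by simp
qed

lemma poly_dvd_if_taylor_dvd:
  assumes "c \<noteq> 0" "\<And>t. t \<noteq> 0 \<Longrightarrow> poly P t = t ^ N * lp_eval p t" "fps_X ^ n dvd taylor c p"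
  shows "[:- c, 1:] ^ n dvd P"
proof -
  have "fps_expansion (poly P) c = fps_expansion (\<lambda>t. t ^ N) c * taylor c p"
    unfolding taylor_eq_fps_expansion using assms(1,2)
    by (subst fps_expansion_cong_nonzero[where g = "\<lambda>t. t ^ N * lp_eval p t"])
       (auto simp: fps_expansion_mult lp_eval_analytic analytic_intros)
  then have "fps_X ^ n dvd fps_expansion (poly P) c" using assms(3) by simp
  then show ?thesis by (rule poly_linear_power_dvd_if_fps_expansion_dvd)
qed

lemma factor_if_taylor_dvd:
  assumes "is_lpoly p" "c \<noteq> 0" "fps_X ^ n dvd taylor c p"
  obtains g where "g analytic_on - {0}" "\<And>t. t \<noteq> 0 \<Longrightarrow> lp_eval p t = (t - c) ^ n * g t"
proof -
  obtain P N where P: "\<And>t. t \<noteq> 0 \<Longrightarrow> poly P t = t ^ N * lp_eval p t"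
    using lpoly_times_power_is_poly[OF assms(1)] by blast
  have "[:- c, 1:] ^ n dvd P" by (rule poly_dvd_if_taylor_dvd[OF assms(2) P assms(3)])
  then obtain Q where Q: "P = [:- c, 1:] ^ n * Q" by (rule dvdE)
  show ?thesis
  proof
    show "(\<lambda>t. poly Q t / t ^ N) analytic_on - {0}" by (intro analytic_intros) auto
    fix t :: complex assume "t \<noteq> 0"
    then show "lp_eval p t = (t - c) ^ n * (poly Q t / t ^ N)"
      using P[of t] by (simp add: Q poly_power field_simps)
  qed
qed

lemma taylor_refl_dvd:
  assumes "is_lpoly p" "c \<noteq> 0" "fps_X ^ n dvd taylor c p"
  shows "fps_X ^ n dvd taylor (inverse c) (lp_refl p)"
proof -
  obtain g where g: "g analytic_on - {0}" "\<And>t. t \<noteq> 0 \<Longrightarrow> lp_eval p t = (t - c) ^ n * g t"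
    using factor_if_taylor_dvd[OF assms] by blast
  have "(g \<circ> inverse) analytic_on {inverse c}"
    using assms(2) by (intro analytic_on_compose_gen[OF _ g(1)] analytic_intros) auto
  then have "(\<lambda>t. (- c / t) ^ n * g (inverse t)) analytic_on {inverse c}"
    using assms(2) by (auto simp: o_def intro!: analytic_intros)
  moreover have "lp_eval (lp_refl p) t = (t - inverse c) ^ n * ((- c / t) ^ n * g (inverse t))"
    if t: "t \<noteq> 0" for t
  proof -
    have "lp_eval (lp_refl p) t = (inverse t - c) ^ n * g (inverse t)"
      using g(2)[of "inverse t"] t by (simp add: lp_eval_refl)
    also have "inverse t - c = (- c / t) * (t - inverse c)"
      using t assms(2) by (simp add: field_simps)
    finally show ?thesis by (simp only: power_mult_distrib mult_ac)
  qed
  ultimately show ?thesis using assms(2) by (intro taylor_dvd_if_factor) auto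
qed

section \<open>The ideals generated by powers of \<open>U a\<close>\<close>

lemma U_eq_linear_factors:
  assumes "a \<noteq> 0" "a\<^sup>2 \<noteq> 1"
  shows "U a = [:- a, 1:] * [:- inverse a, 1:]"
  using assms by (simp add: U_def)

lemma poly_U:
  assumes "a \<noteq> 0" "a\<^sup>2 \<noteq> 1"
  shows "poly (U a) t = (t - a) * (t - inverse a)"
  unfolding U_eq_linear_factors[OF assms] poly_mult by simp

lemma coprime_linear_powers:
  fixes a b :: "'a :: field_gcd"
  assumes "a \<noteq> b"
  shows "coprime ([:- a, 1:] ^ m) ([:- b, 1:] ^ n)"
proof -
  have "\<not> [:- a, 1:] dvd [:- b, 1:]"
  proof
    assume "[:- a, 1:] dvd [:- b, 1:]"
    then have "poly [:- b, 1:] a = 0" by (simp only: poly_eq_0_iff_dvd)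
    with assms show False by simp
  qed
  then have "coprime [:- a, 1:] [:- b, 1:]"
    by (intro prime_elem_imp_coprime prime_elem_linear_field_poly) simp
  then show ?thesis by simp
qed

lemma taylor_dvd_if_in_U_ideal:
  assumes a: "a \<noteq> 0" "a\<^sup>2 \<noteq> 1" and p: "lp_in_ideal (U a ^ n) p"
  shows "fps_X ^ n dvd taylor a p" and "fps_X ^ n dvd taylor a (lp_refl p)"
proof -
  obtain r where r: "is_lpoly r" "p = lp_mult (lp_of_poly (U a ^ n)) r"
    using p by (auto simp: lp_in_ideal_def)
  have eval: "lp_eval p t = (t - a) ^ n * ((t - inverse a) ^ n * lp_eval r t)"
    "lp_eval p t = (t - inverse a) ^ n * ((t - a) ^ n * lp_eval r t)" if "t \<noteq> 0" for t
    using that r by (simp_all add: lp_eval_mult lp_eval_of_poly poly_U[OF a] power_mult_distrib mult_ac)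
  have analytic: "(\<lambda>t. (t - c) ^ n * lp_eval r t) analytic_on {c'}" if "c' \<noteq> 0" for c c'
    using that by (intro analytic_intros lp_eval_analytic) auto
  show "fps_X ^ n dvd taylor a p"
    by (rule taylor_dvd_if_factor[OF a(1) analytic[OF a(1)] eval(1)])
  have "inverse a \<noteq> 0" using a(1) by simp
  then have "fps_X ^ n dvd taylor (inverse a) p"
    using analytic eval(2) by (intro taylor_dvd_if_factor)
  then show "fps_X ^ n dvd taylor a (lp_refl p)"
    using taylor_refl_dvd[of p "inverse a"] a(1) r by simp
qed

lemma in_U_ideal_if_taylor_dvd:
  assumes a: "a \<noteq> 0" "a\<^sup>2 \<noteq> 1" and p: "is_lpoly p"
    and dvd: "fps_X ^ n dvd taylor a p" "fps_X ^ n dvd taylor a (lp_refl p)"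
  shows "lp_in_ideal (U a ^ n) p"
proof -
  have "a \<noteq> inverse a"
    using a by (auto simp: field_simps power2_eq_square)
  have dvd_inverse: "fps_X ^ n dvd taylor (inverse a) p"
    using taylor_refl_dvd[OF is_lpoly_refl[OF p] a(1) dvd(2)] by simp
  obtain P N where P: "\<And>t. t \<noteq> 0 \<Longrightarrow> poly P t = t ^ N * lp_eval p t"
    using lpoly_times_power_is_poly[OF p] by blast
  have "[:- a, 1:] ^ n dvd P" "[:- inverse a, 1:] ^ n dvd P"
    using poly_dvd_if_taylor_dvd[OF _ P] a(1) dvd(1) dvd_inverse by auto
  then have "U a ^ n dvd P"
    unfolding U_eq_linear_factors[OF a] power_mult_distrib
    using coprime_linear_powers[OF \<open>a \<noteq> inverse a\<close>] by (rule divides_mult)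
  then obtain Q where Q: "P = U a ^ n * Q" by (rule dvdE)
  define r where "r = lp_mult (lp_monom (- int N)) (lp_of_poly Q)"
  have "p = lp_mult (lp_of_poly (U a ^ n)) r"
  proof (rule lpoly_eqI)
    fix t :: complex assume t: "t \<noteq> 0"
    have "t ^ N * lp_eval p t = t ^ N * lp_eval (lp_mult (lp_of_poly (U a ^ n)) r) t"
      using P[OF t] t
      by (simp add: Q r_def lp_eval_mult lp_eval_of_poly lp_eval_monom power_int_minus field_simps)
    then show "lp_eval p t = lp_eval (lp_mult (lp_of_poly (U a ^ n)) r) t" using t by simp
  qed (simp_all add: p r_def)
  moreover have "is_lpoly r" by (simp add: r_def)
  ultimately show ?thesis unfolding lp_in_ideal_def by blast
qed

lemma lp_in_U_ideal_iff:
  assumes "a \<noteq> 0" "a\<^sup>2 \<noteq> 1" "is_lpoly p"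
  shows "lp_in_ideal (U a ^ n) p \<longleftrightarrow> fps_X ^ n dvd taylor a p \<and> fps_X ^ n dvd taylor a (lp_refl p)"
  using assms taylor_dvd_if_in_U_ideal in_U_ideal_if_taylor_dvd by blast

lemma exists_lpoly_with_taylor_jet:
  assumes a: "a \<noteq> 0" "a\<^sup>2 \<noteq> 1"
  obtains p where "is_lpoly p" "fps_cutoff n (taylor a p) = fps_cutoff n F"
    "fps_X ^ n dvd taylor a (lp_refl p)"
proof -
  txt \<open>\<open>p = (t - a\<^sup>-\<^sup>1)\<^sup>n R(t)\<close>, where \<open>R\<close> is the Taylor polynomial of degree \<open>< n\<close>
    of \<open>F / (t - a\<^sup>-\<^sup>1)\<^sup>n\<close> at \<open>a\<close>.\<close>
  define b where "b = inverse a"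
  have b: "b \<noteq> 0" "b \<noteq> a" "inverse b = a"
    using a by (auto simp: b_def field_simps power2_eq_square)
  define W where "W = fps_expansion (\<lambda>t. (t - b) ^ n) a"
  have "W $ 0 \<noteq> 0" using b by (simp add: W_def fps_expansion_def)
  define D where "D = inverse W * F"
  have "W * D = F"
    using \<open>W $ 0 \<noteq> 0\<close> by (simp add: D_def mult.assoc[symmetric] inverse_mult_eq_1')
  define R where "R = (\<Sum>j<n. smult (D $ j) ([:- a, 1:] ^ j))"
  define p where "p = lp_of_poly ([:- b, 1:] ^ n * R)"
  have eval: "lp_eval p t = (t - b) ^ n * poly R t" for t
    by (simp add: p_def lp_eval_of_poly poly_power)
  have "poly R = (\<lambda>t. \<Sum>j<n. D $ j * (t - a) ^ j)"
    by (simp add: R_def poly_sum poly_power fun_eq_iff)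
  then have "taylor a p = W * fps_cutoff n D"
    unfolding taylor_eq_fps_expansion eval[abs_def] W_def
    by (simp add: fps_expansion_mult analytic_intros fps_expansion_sum_linear_powers)
  have "is_lpoly p" by (simp add: p_def)
  moreover have "fps_cutoff n (taylor a p) = fps_cutoff n F"
    using \<open>taylor a p = W * fps_cutoff n D\<close> \<open>W * D = F\<close>
    by (auto simp: fps_cutoff_eq_fps_cutoff_iff fps_cutoff_right_mult_nth)
  moreover have "fps_X ^ n dvd taylor b p"
    using b(1) by (rule taylor_dvd_if_factor[where g = "poly R"]) (simp_all add: eval analytic_intros)
  then have "fps_X ^ n dvd taylor a (lp_refl p)"
    using taylor_refl_dvd[OF \<open>is_lpoly p\<close> b(1)] b(3) by simp
  ultimately show ?thesis by (rule that)
qed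

lemma ps_trunc_add_cong:
  "ps_trunc n S = ps_trunc n S' \<Longrightarrow> ps_trunc n T = ps_trunc n T' \<Longrightarrow>
    ps_trunc n (ps_add S T) = ps_trunc n (ps_add S' T')"
  by (cases S; cases S'; cases T; cases T') (simp add: ps_trunc_def ps_add_def fps_cutoff_add)

lemma ps_trunc_smult_cong:
  "ps_trunc n S = ps_trunc n S' \<Longrightarrow> ps_trunc n (ps_smult z S) = ps_trunc n (ps_smult z S')"
  by (cases S; cases S') (auto simp: ps_trunc_def ps_smult_def intro: fps_cutoff_mult_cong)

lemma ps_trunc_br_cong:
  "ps_trunc n S = ps_trunc n S' \<Longrightarrow> ps_trunc n T = ps_trunc n T' \<Longrightarrow>
    ps_trunc n (ps_br S T) = ps_trunc n (ps_br S' T')"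
  by (cases S; cases S'; cases T; cases T')
     (simp only: ps_trunc_def ps_br_def prod.case prod.inject,
      elim conjE, intro conjI fps_cutoff_mult_cong fps_cutoff_diff_cong refl; assumption)

lemma ps_trunc_0: "ps_trunc 0 S = (0, 0, 0)"
  by (cases S) (simp add: ps_trunc_def)

lemma ps_trunc_zero [simp]: "ps_trunc n (0, 0, 0) = (0, 0, 0)"
  by (simp add: ps_trunc_def)

lemma ps_trunc_trunc: "m \<le> n \<Longrightarrow> ps_trunc m (ps_trunc n S) = ps_trunc m S"
  by (cases S) (simp add: ps_trunc_def fps_eq_iff)

lemma ps_eqI_trunc:
  assumes "\<And>n. ps_trunc n S = ps_trunc n T"
  shows "S = T"
proof -
  obtain A B C A' B' C' where S: "S = (A, B, C)" and T: "T = (A', B', C')"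
    by (cases S; cases T)
  have "A $ k = A' $ k \<and> B $ k = B' $ k \<and> C $ k = C' $ k" for k
    using assms[of "Suc k"] by (simp add: S T ps_trunc_def fps_cutoff_eq_fps_cutoff_iff)
  then show ?thesis by (simp add: S T fps_eq_iff)
qed

lemma mem_ps_uL_iff: "S \<in> ps_uL n \<longleftrightarrow> ps_trunc n S = (0, 0, 0)"
proof -
  have "fps_cutoff n F = 0 \<longleftrightarrow> (\<exists>G. F = fps_X ^ n * G)" for F :: "complex fps"
    by (simp add: fps_X_power_dvd_iff_fps_cutoff_eq_0[symmetric] dvd_def)
  then show ?thesis by (cases S) (auto simp: ps_uL_def ps_trunc_def)
qed

lemma ps_trunc_coherent_limit:
  assumes "\<And>m n. m \<le> n \<Longrightarrow> ps_trunc m (T n) = ps_trunc m (T m)"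
  shows "\<exists>S. \<forall>n. ps_trunc n S = ps_trunc n (T n)"
proof -
  define A B C where "A n = fst (T n)" and "B n = fst (snd (T n))" and "C n = snd (snd (T n))" for n
  have T: "T n = (A n, B n, C n)" for n by (simp add: A_def B_def C_def)
  have "fps_cutoff m (A n) = fps_cutoff m (A m)" "fps_cutoff m (B n) = fps_cutoff m (B m)"
    "fps_cutoff m (C n) = fps_cutoff m (C m)" if "m \<le> n" for m n
    using assms[OF that] by (simp_all add: T ps_trunc_def)
  note limits = fps_cutoff_coherent_limit[of A, OF this(1)] fps_cutoff_coherent_limit[of B, OF this(2)]
    fps_cutoff_coherent_limit[of C, OF this(3)]
  show ?thesis
    by (intro exI[of _ "(Abs_fps (\<lambda>j. A (Suc j) $ j), Abs_fps (\<lambda>j. B (Suc j) $ j),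
        Abs_fps (\<lambda>j. C (Suc j) $ j))"] allI)
       (simp only: T ps_trunc_def prod.case limits)
qed

section \<open>The Onsager algebra and the Taylor map\<close>

lemma loop_carrier_if_OA: "x \<in> OA \<Longrightarrow> x \<in> loop_carrier"
  by (auto simp: OA_def loop_carrier_def)

lemma OA_memE:
  assumes "x \<in> OA"
  obtains p q where "x = (p, lp_refl p, q)" "is_lpoly p" "is_lpoly q" "lp_refl q = lp_neg q"
  using assms by (auto simp: OA_def)

lemma OA_add:
  assumes "x \<in> OA" "y \<in> OA"
  shows "loop_add x y \<in> OA"
proof -
  obtain p q where x: "x = (p, lp_refl p, q)" "is_lpoly p" "is_lpoly q" "lp_refl q = lp_neg q"
    using assms(1) by (rule OA_memE)
  obtain p' q' where y: "y = (p', lp_refl p', q')" "is_lpoly p'" "is_lpoly q'" "lp_refl q' = lp_neg q'"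
    using assms(2) by (rule OA_memE)
  have "lp_refl (lp_add q q') = lp_neg (lp_add q q')"
    using x(4) y(4) by (simp add: lp_refl_add) (simp add: lp_add_def lp_neg_def fun_eq_iff)
  then show ?thesis using x y by (auto simp: OA_def loop_add_def lp_refl_add)
qed

lemma OA_smult:
  assumes "x \<in> OA"
  shows "loop_smult z x \<in> OA"
proof -
  obtain p q where x: "x = (p, lp_refl p, q)" "is_lpoly p" "is_lpoly q" "lp_refl q = lp_neg q"
    using assms by (rule OA_memE)
  have "lp_refl (lp_smult z q) = lp_neg (lp_smult z q)"
    using x(4) by (simp add: lp_refl_smult) (simp add: lp_smult_def lp_neg_def fun_eq_iff)
  then show ?thesis using x by (auto simp: OA_def loop_smult_def lp_refl_smult)
qed

lemma OA_br:
  assumes "x \<in> OA" "y \<in> OA"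
  shows "loop_br x y \<in> OA"
proof -
  obtain p q where x: "x = (p, lp_refl p, q)" "is_lpoly p" "is_lpoly q" "lp_refl q = lp_neg q"
    using assms(1) by (rule OA_memE)
  obtain p' q' where y: "y = (p', lp_refl p', q')" "is_lpoly p'" "is_lpoly q'" "lp_refl q' = lp_neg q'"
    using assms(2) by (rule OA_memE)
  have odd: "lp_eval q (inverse t) = - lp_eval q t" "lp_eval q' (inverse t) = - lp_eval q' t" for t
    using arg_cong[OF x(4), of "\<lambda>c. lp_eval c t"] arg_cong[OF y(4), of "\<lambda>c. lp_eval c t"]
    by (simp_all add: lp_eval_refl lp_eval_neg)
  define P where "P = lp_smult 2 (lp_add (lp_mult q p') (lp_neg (lp_mult p q')))"
  define Q where "Q = lp_add (lp_mult p (lp_refl p')) (lp_neg (lp_mult (lp_refl p) p'))"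
  have "lp_refl P = lp_smult 2 (lp_add (lp_mult (lp_refl p) q') (lp_neg (lp_mult q (lp_refl p'))))"
    using x y by (intro lpoly_eqI)
      (auto simp: P_def lp_eval_refl lp_eval_smult lp_eval_add lp_eval_neg lp_eval_mult odd algebra_simps)
  moreover have "lp_refl Q = lp_neg Q"
    using x y by (intro lpoly_eqI)
      (auto simp: Q_def lp_eval_refl lp_eval_add lp_eval_neg lp_eval_mult)
  ultimately show ?thesis using x y by (auto simp: OA_def loop_br_def P_def Q_def)
qed

lemma s_map_add:
  assumes "a \<noteq> 0" "x \<in> loop_carrier" "y \<in> loop_carrier"
  shows "s_map a (loop_add x y) = ps_add (s_map a x) (s_map a y)"
  using assms by (cases x; cases y) (simp add: loop_carrier_def loop_add_def s_map_def ps_add_def taylor_add)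

lemma s_map_smult:
  assumes "a \<noteq> 0" "x \<in> loop_carrier"
  shows "s_map a (loop_smult z x) = ps_smult z (s_map a x)"
  using assms by (cases x) (simp add: loop_carrier_def loop_smult_def s_map_def ps_smult_def taylor_smult)

lemma s_map_br:
  assumes "a \<noteq> 0" "x \<in> loop_carrier" "y \<in> loop_carrier"
  shows "s_map a (loop_br x y) = ps_br (s_map a x) (s_map a y)"
  using assms
  by (cases x; cases y) (simp add: loop_carrier_def loop_br_def s_map_def ps_br_def taylor_add taylor_smult
      taylor_neg taylor_mult numeral_fps_const)

lemma s_mapL_add:
  "a \<noteq> 0 \<Longrightarrow> x \<in> loop_carrier \<Longrightarrow> y \<in> loop_carrier \<Longrightarrow>
    s_mapL a n (loop_add x y) = ps_add (s_mapL a n x) (s_mapL a n y)"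
  by (cases "s_map a x"; cases "s_map a y") (simp add: s_mapL_def s_map_add ps_trunc_def ps_add_def fps_cutoff_add)

lemma s_mapL_smult:
  "a \<noteq> 0 \<Longrightarrow> x \<in> loop_carrier \<Longrightarrow> s_mapL a n (loop_smult z x) = ps_smult z (s_mapL a n x)"
  by (cases "s_map a x") (simp add: s_mapL_def s_map_smult ps_trunc_def ps_smult_def fps_eq_iff)

lemma OA_ker_eq:
  assumes a: "a \<noteq> 0" "a\<^sup>2 \<noteq> 1"
  shows "OA_ker a n = {x \<in> OA. s_mapL a n x = (0, 0, 0)}"
proof -
  have ideal_iff: "x \<in> OA_ideal (U a ^ n) \<longleftrightarrow> s_mapL a n x = (0, 0, 0)" if x: "x \<in> OA" for x
  proof -
    obtain p q where pq: "x = (p, lp_refl p, q)" "is_lpoly p" "is_lpoly q" "lp_refl q = lp_neg q"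
      using x by (rule OA_memE)
    have "taylor a (lp_refl q) = - taylor a q" using pq(4) a(1) by (simp add: taylor_neg)
    then show ?thesis
      using x pq(2,3)
      by (auto simp: OA_ideal_def pq(1) lp_in_U_ideal_iff[OF a] s_mapL_def s_map_def ps_trunc_def
          fps_X_power_dvd_iff_fps_cutoff_eq_0)
  qed
  have "OA_ideal (U a ^ n) \<subseteq> OA" by (auto simp: OA_ideal_def)
  then show ?thesis using ideal_iff by (auto simp: OA_ker_def s_mapL_def ps_trunc_0)
qed

lemma OA_coset_eq:
  assumes a: "a \<noteq> 0" "a\<^sup>2 \<noteq> 1" and x: "x \<in> OA"
  shows "OA_coset a n x = {y \<in> OA. s_mapL a n y = s_mapL a n x}"
proof (intro set_eqI iffI)
  fix y assume "y \<in> OA_coset a n x"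
  then obtain k where k: "y = loop_add x k" "k \<in> OA" "s_mapL a n k = (0, 0, 0)"
    by (auto simp: OA_coset_def OA_ker_eq[OF a])
  then show "y \<in> {y \<in> OA. s_mapL a n y = s_mapL a n x}"
    using x a(1) by (cases "s_mapL a n x") (auto simp: s_mapL_add OA_add ps_add_def loop_carrier_if_OA)
next
  fix y assume y: "y \<in> {y \<in> OA. s_mapL a n y = s_mapL a n x}"
  define k where "k = loop_add y (loop_smult (- 1) x)"
  have "k \<in> OA" using x y by (simp add: k_def OA_add OA_smult)
  moreover have "s_mapL a n k = (0, 0, 0)"
    using x y a(1)
    by (cases "s_mapL a n x")
       (auto simp: k_def s_mapL_add s_mapL_smult ps_add_def ps_smult_def loop_carrier_if_OA OA_smult fps_eq_iff)
  moreover have "y = loop_add x k"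
    by (cases x; cases y) (simp add: k_def loop_add_def loop_smult_def lp_add_def lp_smult_def)
  ultimately show "y \<in> OA_coset a n x" unfolding OA_coset_def OA_ker_eq[OF a] by blast
qed

lemma s_mapL_surj:
  assumes a: "a \<noteq> 0" "a\<^sup>2 \<noteq> 1"
  shows "\<exists>x\<in>OA. s_mapL a n x = ps_trunc n S"
proof -
  obtain A B C where S: "S = (A, B, C)" by (cases S)
  obtain p1 where p1: "is_lpoly p1" "fps_cutoff n (taylor a p1) = fps_cutoff n A"
    "fps_X ^ n dvd taylor a (lp_refl p1)" using exists_lpoly_with_taylor_jet[OF a] .
  obtain p2 where p2: "is_lpoly p2" "fps_cutoff n (taylor a p2) = fps_cutoff n B"
    "fps_X ^ n dvd taylor a (lp_refl p2)" using exists_lpoly_with_taylor_jet[OF a] .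
  obtain q1 where q1: "is_lpoly q1" "fps_cutoff n (taylor a q1) = fps_cutoff n C"
    "fps_X ^ n dvd taylor a (lp_refl q1)" using exists_lpoly_with_taylor_jet[OF a] .
  txt \<open>The reflections of \<open>p1\<close>, \<open>p2\<close>, \<open>q1\<close> vanish to order \<open>n\<close> at \<open>a\<close>, so the jets of
    \<open>p\<close>, \<open>lp_refl p\<close> and \<open>q\<close> at \<open>a\<close> are those of \<open>p1\<close>, \<open>p2\<close> and \<open>q1\<close>.\<close>
  define p where "p = lp_add p1 (lp_refl p2)"
  define q where "q = lp_add q1 (lp_neg (lp_refl q1))"
  have "is_lpoly p" "is_lpoly q" using p1 p2 q1 by (simp_all add: p_def q_def)
  moreover have "lp_refl q = lp_neg q"
    by (simp add: q_def lp_refl_def lp_add_def lp_neg_def fun_eq_iff)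
  ultimately have "(p, lp_refl p, q) \<in> OA" unfolding OA_def by blast
  moreover have "s_mapL a n (p, lp_refl p, q) = ps_trunc n S"
    using p1 p2 q1 a(1)
    by (simp add: S s_mapL_def s_map_def ps_trunc_def p_def q_def lp_refl_add taylor_add taylor_neg
        fps_cutoff_add fps_cutoff_diff fps_X_power_dvd_iff_fps_cutoff_eq_0)
  ultimately show ?thesis by blast
qed

section \<open>The completion\<close>

definition ps_to_hat :: "complex \<Rightarrow> sl2ps \<Rightarrow> nat \<Rightarrow> loop set" where
  "ps_to_hat a S = (\<lambda>n. {x \<in> OA. s_mapL a n x = ps_trunc n S})"

definition hat_to_ps :: "complex \<Rightarrow> (nat \<Rightarrow> loop set) \<Rightarrow> sl2ps" where
  "hat_to_ps a = inv_into UNIV (ps_to_hat a)"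

context
  fixes a :: complex
  assumes a: "a \<noteq> 0" "a\<^sup>2 \<noteq> 1"
begin

lemma ps_to_hat_nonempty: "ps_to_hat a S n \<noteq> {}"
  using s_mapL_surj[OF a, of n S] by (auto simp: ps_to_hat_def)

lemma ps_to_hat_eq_OA_coset:
  assumes "x \<in> ps_to_hat a S n" "m \<le> n"
  shows "ps_to_hat a S m = OA_coset a m x"
proof -
  have "s_mapL a m x = ps_trunc m (ps_trunc n (s_map a x))"
    using assms(2) by (simp add: s_mapL_def ps_trunc_trunc)
  also have "\<dots> = ps_trunc m S"
    using assms by (simp add: ps_to_hat_def s_mapL_def ps_trunc_trunc)
  finally show ?thesis using assms(1) by (simp add: OA_coset_eq[OF a] ps_to_hat_def)
qed

lemma ps_to_hat_in_OA_hat: "ps_to_hat a S \<in> OA_hat a"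
  unfolding OA_hat_def
proof (intro CollectI allI conjI ballI impI)
  fix n
  obtain x where "x \<in> ps_to_hat a S n" using ps_to_hat_nonempty by blast
  then show "ps_to_hat a S n \<in> OA_quot a n"
    using ps_to_hat_eq_OA_coset[of x S n n] by (auto simp: OA_quot_def ps_to_hat_def)
qed (rule ps_to_hat_eq_OA_coset)

lemma ps_to_hat_eq_iff: "ps_to_hat a S n = ps_to_hat a T n \<longleftrightarrow> ps_trunc n S = ps_trunc n T"
proof
  assume eq: "ps_to_hat a S n = ps_to_hat a T n"
  obtain x where x: "x \<in> ps_to_hat a S n" using ps_to_hat_nonempty by blast
  then have "x \<in> ps_to_hat a T n" using eq by simp
  with x show "ps_trunc n S = ps_trunc n T" by (simp add: ps_to_hat_def)
qed (simp add: ps_to_hat_def)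

lemma OA_hat_in_range_ps_to_hat:
  assumes X: "X \<in> OA_hat a"
  shows "X \<in> range (ps_to_hat a)"
proof -
  have "\<forall>n. \<exists>x. x \<in> X n \<and> x \<in> OA"
  proof
    fix n
    obtain x where "x \<in> OA" "X n = OA_coset a n x"
      using X unfolding OA_hat_def OA_quot_def by blast
    then show "\<exists>x. x \<in> X n \<and> x \<in> OA" by (intro exI[of _ x]) (simp add: OA_coset_eq[OF a])
  qed
  then obtain x where x: "\<And>n. x n \<in> X n" "\<And>n. x n \<in> OA" by (metis choice_iff)
  have coset: "X m = {y \<in> OA. s_mapL a m y = s_mapL a m (x n)}" if "m \<le> n" for m n
  proof -
    have "X m = OA_coset a m (x n)" using X that x(1)[of n] unfolding OA_hat_def by blast
    then show ?thesis using OA_coset_eq[OF a x(2)] by simp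
  qed
  have "ps_trunc m (s_map a (x n)) = ps_trunc m (s_map a (x m))" if "m \<le> n" for m n
    using x(1)[of m] coset[OF that] by (simp add: s_mapL_def)
  then obtain S where S: "\<And>n. ps_trunc n S = ps_trunc n (s_map a (x n))"
    using ps_trunc_coherent_limit[of "\<lambda>n. s_map a (x n)"] by blast
  have "X = ps_to_hat a S"
  proof
    fix n show "X n = ps_to_hat a S n"
      using coset[of n n] by (simp add: ps_to_hat_def s_mapL_def S)
  qed
  then show ?thesis by blast
qed

lemma bij_betw_ps_to_hat: "bij_betw (ps_to_hat a) UNIV (OA_hat a)"
proof (rule bij_betw_imageI)
  show "inj (ps_to_hat a)"
    by (rule injI) (metis ps_eqI_trunc ps_to_hat_eq_iff)
  show "range (ps_to_hat a) = OA_hat a"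
    using ps_to_hat_in_OA_hat OA_hat_in_range_ps_to_hat by blast
qed

lemma hat_to_ps_ps_to_hat [simp]: "hat_to_ps a (ps_to_hat a S) = S"
  using bij_betw_ps_to_hat by (simp add: hat_to_ps_def bij_betw_inv_into_left)

lemma ps_to_hat_hat_to_ps: "X \<in> OA_hat a \<Longrightarrow> ps_to_hat a (hat_to_ps a X) = X"
  using bij_betw_ps_to_hat by (simp add: hat_to_ps_def bij_betw_inv_into_right)

lemma coset_op_ps_to_hat:
  assumes closed: "\<And>x y. x \<in> OA \<Longrightarrow> y \<in> OA \<Longrightarrow> f x y \<in> OA"
    and hom: "\<And>x y. x \<in> OA \<Longrightarrow> y \<in> OA \<Longrightarrow> s_map a (f x y) = g (s_map a x) (s_map a y)"
    and cong: "\<And>n S S' T T'. ps_trunc n S = ps_trunc n S' \<Longrightarrow> ps_trunc n T = ps_trunc n T' \<Longrightarrow>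
      ps_trunc n (g S T) = ps_trunc n (g S' T')"
  shows "(\<lambda>n. \<Union>{OA_coset a n (f x y) | x y. x \<in> ps_to_hat a S n \<and> y \<in> ps_to_hat a T n}) =
    ps_to_hat a (g S T)"
proof
  fix n
  have coset: "OA_coset a n (f x y) = ps_to_hat a (g S T) n"
    if x: "x \<in> ps_to_hat a S n" and y: "y \<in> ps_to_hat a T n" for x y
  proof -
    have "x \<in> OA" "y \<in> OA" using x y by (auto simp: ps_to_hat_def)
    moreover have "s_mapL a n (f x y) = ps_trunc n (g S T)"
      using x y \<open>x \<in> OA\<close> \<open>y \<in> OA\<close> by (auto simp: ps_to_hat_def s_mapL_def hom intro: cong)
    ultimately show ?thesis by (simp add: OA_coset_eq[OF a] closed ps_to_hat_def)
  qed
  obtain x y where "x \<in> ps_to_hat a S n" "y \<in> ps_to_hat a T n" using ps_to_hat_nonempty by blast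
  then show "\<Union>{OA_coset a n (f x y) | x y. x \<in> ps_to_hat a S n \<and> y \<in> ps_to_hat a T n} =
      ps_to_hat a (g S T) n"
    using coset by blast
qed

lemma hat_br_ps_to_hat: "hat_br a (ps_to_hat a S) (ps_to_hat a T) = ps_to_hat a (ps_br S T)"
  unfolding hat_br_def
  by (rule coset_op_ps_to_hat[where f = loop_br and g = ps_br])
     (auto simp: OA_br s_map_br a(1) loop_carrier_if_OA intro: ps_trunc_br_cong)

lemma hat_add_ps_to_hat: "hat_add a (ps_to_hat a S) (ps_to_hat a T) = ps_to_hat a (ps_add S T)"
  unfolding hat_add_def
  by (rule coset_op_ps_to_hat[where f = loop_add and g = ps_add])
     (auto simp: OA_add s_map_add a(1) loop_carrier_if_OA intro: ps_trunc_add_cong)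

lemma hat_smult_ps_to_hat: "hat_smult a z (ps_to_hat a S) = ps_to_hat a (ps_smult z S)"
proof -
  have "(\<lambda>n. \<Union>{OA_coset a n (loop_smult z x) | x y. x \<in> ps_to_hat a S n \<and> y \<in> ps_to_hat a S n}) =
      ps_to_hat a (ps_smult z S)"
    by (rule coset_op_ps_to_hat[where f = "\<lambda>x y. loop_smult z x" and g = "\<lambda>S T. ps_smult z S"])
       (auto simp: OA_smult s_map_smult a(1) loop_carrier_if_OA intro: ps_trunc_smult_cong)
  moreover have "{OA_coset a n (loop_smult z x) | x. x \<in> ps_to_hat a S n} =
      {OA_coset a n (loop_smult z x) | x y. x \<in> ps_to_hat a S n \<and> y \<in> ps_to_hat a S n}" for n
    using ps_to_hat_nonempty[of S n] by blast
  ultimately show ?thesis unfolding hat_smult_def by simp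
qed

lemma hat_ker_eq: "hat_ker a n = ps_to_hat a ` ps_uL n"
proof -
  have "OA_ker a n = ps_to_hat a (0, 0, 0) n"
    by (simp add: OA_ker_eq[OF a] ps_to_hat_def)
  then have ker: "ps_to_hat a S \<in> hat_ker a n \<longleftrightarrow> S \<in> ps_uL n" for S
    by (simp add: hat_ker_def ps_to_hat_in_OA_hat ps_to_hat_eq_iff mem_ps_uL_iff ps_trunc_def)
  show ?thesis
  proof (intro set_eqI iffI)
    fix X assume X: "X \<in> hat_ker a n"
    then have "X \<in> range (ps_to_hat a)" by (simp add: hat_ker_def OA_hat_in_range_ps_to_hat)
    with X show "X \<in> ps_to_hat a ` ps_uL n" using ker by blast
  qed (use ker in blast)
qed

lemma hat_to_ps_fibres:
  assumes "X \<in> OA_hat a" "x \<in> X n"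
  shows "s_mapL a n x = ps_trunc n (hat_to_ps a X)"
proof -
  have "x \<in> ps_to_hat a (hat_to_ps a X) n" using assms by (simp add: ps_to_hat_hat_to_ps)
  then show ?thesis by (simp add: ps_to_hat_def)
qed

lemma bij_betw_hat_to_ps: "bij_betw (hat_to_ps a) (OA_hat a) UNIV"
  unfolding hat_to_ps_def by (rule bij_betw_inv_into[OF bij_betw_ps_to_hat])

lemma hat_to_ps_hat_br:
  "X \<in> OA_hat a \<Longrightarrow> Y \<in> OA_hat a \<Longrightarrow>
    hat_to_ps a (hat_br a X Y) = ps_br (hat_to_ps a X) (hat_to_ps a Y)"
  using hat_br_ps_to_hat[of "hat_to_ps a X" "hat_to_ps a Y"] by (simp add: ps_to_hat_hat_to_ps)

lemma hat_to_ps_hat_add: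
  "X \<in> OA_hat a \<Longrightarrow> Y \<in> OA_hat a \<Longrightarrow>
    hat_to_ps a (hat_add a X Y) = ps_add (hat_to_ps a X) (hat_to_ps a Y)"
  using hat_add_ps_to_hat[of "hat_to_ps a X" "hat_to_ps a Y"] by (simp add: ps_to_hat_hat_to_ps)

lemma hat_to_ps_hat_smult:
  "X \<in> OA_hat a \<Longrightarrow> hat_to_ps a (hat_smult a z X) = ps_smult z (hat_to_ps a X)"
  using hat_smult_ps_to_hat[of z "hat_to_ps a X"] by (simp add: ps_to_hat_hat_to_ps)

lemma hat_to_ps_hat_ker: "hat_to_ps a ` hat_ker a n = ps_uL n"
  by (simp add: hat_ker_eq image_image)

end

theorem theorem3:
  fixes a :: complex
  assumes "a \<noteq> 0" and "a \<noteq> 1" and "a \<noteq> -1"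
  shows
    "(\<forall>x\<in>OA. \<forall>y\<in>OA.
        s_map a (loop_br x y) = ps_br (s_map a x) (s_map a y) \<and>
        s_map a (loop_add x y) = ps_add (s_map a x) (s_map a y)) \<and>
     (\<forall>z. \<forall>x\<in>OA. s_map a (loop_smult z x) = ps_smult z (s_map a x)) \<and>
     (\<forall>L\<ge>1.
        (\<forall>Y. \<exists>x\<in>OA. s_mapL a L x = ps_trunc L Y) \<and>
        {x \<in> OA. s_mapL a L x = ps_trunc L (0, 0, 0)} = OA_ker a L) \<and>
     (\<exists>\<Phi>. (\<forall>X\<in>OA_hat a. \<forall>L. \<forall>x\<in>X L. s_mapL a L x = ps_trunc L (\<Phi> X)) \<and>
          bij_betw \<Phi> (OA_hat a) UNIV \<and>
          (\<forall>X\<in>OA_hat a. \<forall>Y\<in>OA_hat a.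
              \<Phi> (hat_br a X Y) = ps_br (\<Phi> X) (\<Phi> Y) \<and>
              \<Phi> (hat_add a X Y) = ps_add (\<Phi> X) (\<Phi> Y)) \<and>
          (\<forall>z. \<forall>X\<in>OA_hat a. \<Phi> (hat_smult a z X) = ps_smult z (\<Phi> X)) \<and>
          (\<forall>L. \<Phi> ` hat_ker a L = ps_uL L))"
proof -
  have a: "a \<noteq> 0" "a\<^sup>2 \<noteq> 1"
    using assms by (auto simp: power2_eq_1_iff)
  show ?thesis
    using a
    by (intro conjI ballI allI impI exI[of _ "hat_to_ps a"])
       (simp_all add: s_map_br s_map_add s_map_smult loop_carrier_if_OA s_mapL_surj OA_ker_eq
         hat_to_ps_fibres bij_betw_hat_to_ps hat_to_ps_hat_br hat_to_ps_hat_add hat_to_ps_hat_smult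
         hat_to_ps_hat_ker)
qed

end
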